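(* Let $\Theta = \{l_1:\mathtt{qbit}, l_2:\mathtt{qbit}\}$ and $\theta = (l_1,l_2)$. Let $\mathscr{C}$ be a quantum circuit with holes such that $l:\mathtt{bit}, \Theta \rhd \mathscr{C} \rhd \Theta$ is derivable, and let $\mathscr{D}$ be the circuit with holes $\mathtt{if}\ l\ \mathtt{then}\ ([-];\{-\})\ \mathtt{else}\ (\{-\};[-])$. If $\mathscr{C} \approx \mathscr{D}$, then either the hole $[-]$ or the hole $\{-\}$ appears more than once in $\mathscr{C}$.
   Context: Circuits: fix an infinite set of labels; base types $\mathtt{bit},\mathtt{qbit}$; the operation set $\mathbb{Q}$ consists of $\mathtt{zero},\mathtt{one}:()\to(\mathtt{bit})$, $\mathtt{discard}:(\mathtt{bit})\to()$, $\mathtt{new}:(\mathtt{bit})\to(\mathtt{qbit})$, $\mathtt{meas}:(\mathtt{qbit})\to(\mathtt{bit})$, $H,S,T:(\mathtt{qbit})\to(\mathtt{qbit})$, $\mathrm{CNOT}:(\mathtt{qbit},\mathtt{qbit})\to(\mathtt{qbit},\mathtt{qbit})$. Circuits with holes are given by $\mathscr{C},\mathscr{D},\mathscr{E} ::= [-] \mid \{-\} \mid c^{\overline{l}}_{\overline{r}} \mid \mathscr{C};\mathscr{D} \mid \mathtt{if}\ l\ \mathtt{then}\ \mathscr{D}\ \mathtt{else}\ \mathscr{E}$ with $c\in\mathbb{Q}$ (gate $c$ applied to input wires $\overline{l}$ producing output wires $\overline{r}$). Environments are finite sets of (label : base type), each label at most once. Typing $\Gamma \rhd \mathscr{C} \rhd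 \Delta$ is derived by: $\Theta \rhd [-] \rhd \Theta$ and $\Theta \rhd \{-\} \rhd \Theta$ (with $\Theta$ as in the claim); for $c$ with input types $(B_1..B_n)$, output types $(B'_1..B'_m)$: $\Xi, l_1:B_1,\dots,l_n:B_n \rhd c^{(l_1..l_n)}_{(r_1..r_m)} \rhd \Xi, r_1:B'_1,\dots,r_m:B'_m$ for any environment $\Xi$; from $\Gamma\rhd\mathscr{C}\rhd\Psi$ and $\Psi\rhd\mathscr{D}\rhd\Delta$ infer $\Gamma\rhd\mathscr{C};\mathscr{D}\rhd\Delta$; from $\Gamma\rhd\mathscr{D}\rhd\Delta$ and $\Gamma\rhd\mathscr{E}\rhd\Delta$ infer $\Gamma,l:\mathtt{bit}\rhd \mathtt{if}\ l\ \mathtt{then}\ \mathscr{D}\ \mathtt{else}\ \mathscr{E}\rhd\Delta$. For circuits $C, D$ (possibly using additional gates), $\mathscr{C}(C,D)$ denotes the result of replacing $[-]$ by $C$ and $\{-\}$ by $D$. For any $4\times 4$ unitary matrix $U$, $U^\theta_\theta$ denotes the circuit applying $U$ as a gate to the wires $(l_1,l_2)$, with $\Theta \rhd U^\theta_\theta \rhd \Theta$. Semantics (category CPM): objects are tuples $(n_1,\dots,n_k)$ of positive integers with $V_{(n_1..n_k)}=\prod_i \mathbb{C}^{n_i\times n_i}$, morphisms are completely positive linear maps, tensor $(n_i)\otimes(m_j)=(n_im_j)_{i,j}$, unit $(1)$. $[\![\mathtt{bit}]\!]=(1,1)$, $[\![\mathtt{qbit}]\!]=(2)$, environments are interpreted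 as tensor products ordered by a fixed linear order on labels. A unitary gate $U$ is interpreted as $A\mapsto UAU^\dagger$; $[\![\mathtt{one}]\!](x)=(x,0)$, $[\![\mathtt{zero}]\!](x)=(0,x)$, $[\![\mathtt{new}]\!](x,0)=x|1\rangle\langle1|$, $[\![\mathtt{new}]\!](0,x)=x|0\rangle\langle0|$, $[\![\mathtt{meas}]\!]\begin{pmatrix}a&b\\c&d\end{pmatrix}=(a,d)$, $[\![\mathtt{discard}]\!](a,b)=a+b$. $[\![c^{\overline l}_{\overline r}]\!]$ is $\mathrm{id}_{[\![\Xi]\!]}\otimes[\![c]\!]$ up to symmetries, $[\![C;D]\!]=[\![D]\!]\circ[\![C]\!]$, and identifying $[\![\Gamma,l:\mathtt{bit}]\!]\cong[\![\Gamma]\!]\times[\![\Gamma]\!]$, $[\![\mathtt{if}\ l\ \mathtt{then}\ C\ \mathtt{else}\ D]\!](\vec A,\vec B)=[\![C]\!](\vec A)+[\![D]\!](\vec B)$. For circuits with holes $\Gamma\rhd\mathscr{C}\rhd\Delta$ and $\Gamma\rhd\mathscr{D}\rhd\Delta$, write $\mathscr{C}\approx\mathscr{D}$ if for all $4\times4$ unitary matrices $U,V$, $[\![\mathscr{C}(U^\theta_\theta,V^\theta_\theta)]\!] = [\![\mathscr{D}(U^\theta_\theta,V^\theta_\theta)]\!]$. *)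

theory Defs
  imports "Jordan_Normal_Form.Schur_Decomposition"
begin

datatype btype = Bit | Qbit

datatype qgate = Zero | One | Discard | New | Meas | Hgate | Sgate | Tgate | CNOT

fun gate_in :: "qgate \<Rightarrow> btype list" where
  "gate_in Zero = []"
| "gate_in One = []"
| "gate_in Discard = [Bit]"
| "gate_in New = [Bit]"
| "gate_in Meas = [Qbit]"
| "gate_in Hgate = [Qbit]"
| "gate_in Sgate = [Qbit]"
| "gate_in Tgate = [Qbit]"
| "gate_in CNOT = [Qbit, Qbit]"

fun gate_out :: "qgate \<Rightarrow> btype list" where
  "gate_out Zero = [Bit]"
| "gate_out One = [Bit]"
| "gate_out Discard = []"
| "gate_out New = [Qbit]"
| "gate_out Meas = [Bit]"
| "gate_out Hgate = [Qbit]"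
| "gate_out Sgate = [Qbit]"
| "gate_out Tgate = [Qbit]"
| "gate_out CNOT = [Qbit, Qbit]"

text \<open>Circuits with holes: Hole1 is [-], Hole2 is {-}; Gate g ls rs is g applied to
  input wires ls producing output wires rs.\<close>
datatype 'l circ =
    Hole1
  | Hole2
  | Gate qgate "'l list" "'l list"
  | Seq "'l circ" "'l circ"
  | If 'l "'l circ" "'l circ"

fun count_hole1 :: "'l circ \<Rightarrow> nat" where
  "count_hole1 Hole1 = 1"
| "count_hole1 Hole2 = 0"
| "count_hole1 (Gate g ls rs) = 0"
| "count_hole1 (Seq C D) = count_hole1 C + count_hole1 D"
| "count_hole1 (If l C D) = count_hole1 C + count_hole1 D"

fun count_hole2 :: "'l circ \<Rightarrow> nat" where
  "count_hole2 Hole1 = 0"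
| "count_hole2 Hole2 = 1"
| "count_hole2 (Gate g ls rs) = 0"
| "count_hole2 (Seq C D) = count_hole2 C + count_hole2 D"
| "count_hole2 (If l C D) = count_hole2 C + count_hole2 D"

type_synonym 'l env = "'l \<rightharpoonup> btype"

text \<open>typing Theta Gamma C Delta  means  Gamma |> C |> Delta, where Theta is the
  environment of the holes.\<close>
inductive typing :: "'l env \<Rightarrow> 'l env \<Rightarrow> 'l circ \<Rightarrow> 'l env \<Rightarrow> bool" for Th :: "'l env" where
  hole1: "finite (dom Th) \<Longrightarrow> typing Th Th Hole1 Th"
| hole2: "finite (dom Th) \<Longrightarrow> typing Th Th Hole2 Th"
| gate: "\<lbrakk> finite (dom Xi); length ls = length (gate_in g); length rs = length (gate_out g);
           distinct ls; distinct rs; set ls \<inter> dom Xi = {}; set rs \<inter> dom Xi = {} \<rbrakk>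
         \<Longrightarrow> typing Th (Xi ++ map_of (zip ls (gate_in g))) (Gate g ls rs)
                       (Xi ++ map_of (zip rs (gate_out g)))"
| seq: "\<lbrakk> typing Th Ga C Ps; typing Th Ps D De \<rbrakk> \<Longrightarrow> typing Th Ga (Seq C D) De"
| ifte: "\<lbrakk> typing Th Ga D De; typing Th Ga E De; l \<notin> dom Ga \<rbrakk>
         \<Longrightarrow> typing Th (Ga(l \<mapsto> Bit)) (If l D E) De"

text \<open>An element of V_[[Gamma]] is represented label-wise: st c i j is the (i,j) entry of the
  block indexed by the classical valuation c; c assigns values to the bit labels
  (True = first component of (1,1)), i and j assign values to the qubit labels
  (True = basis state |1>). Only canonical arguments (False outside the relevant labels)
  are meaningful.\<close>
type_synonym 'l state = "('l \<Rightarrow> bool) \<Rightarrow> ('l \<Rightarrow> bool) \<Rightarrow> ('l \<Rightarrow> bool) \<Rightarrow> complex"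

definition labels_of :: "'l env \<Rightarrow> btype \<Rightarrow> 'l set" where
  "labels_of G B = {x. G x = Some B}"

definition canon :: "'l set \<Rightarrow> ('l \<Rightarrow> bool) \<Rightarrow> bool" where
  "canon A f \<longleftrightarrow> (\<forall>x. x \<notin> A \<longrightarrow> \<not> f x)"

definition canon_idx :: "'l env \<Rightarrow> ('l \<Rightarrow> bool) \<Rightarrow> ('l \<Rightarrow> bool) \<Rightarrow> ('l \<Rightarrow> bool) \<Rightarrow> bool" where
  "canon_idx G c i j \<longleftrightarrow> canon (labels_of G Bit) c \<and> canon (labels_of G Qbit) i \<and> canon (labels_of G Qbit) j"

definition states :: "'l env \<Rightarrow> 'l state set" where
  "states G = {st. \<forall>c i j. \<not> canon_idx G c i j \<longrightarrow> st c i j = 0}"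

fun setv :: "('l \<Rightarrow> bool) \<Rightarrow> 'l list \<Rightarrow> bool list \<Rightarrow> ('l \<Rightarrow> bool)" where
  "setv f (x # xs) (b # bs) = (setv f xs bs)(x := b)"
| "setv f _ _ = f"

definition clr :: "('l \<Rightarrow> bool) \<Rightarrow> 'l list \<Rightarrow> ('l \<Rightarrow> bool)" where
  "clr f xs = setv f xs (replicate (length xs) False)"

text \<open>Big-endian index of a list of bits (first wire = most significant).\<close>
fun bidx :: "bool list \<Rightarrow> nat" where
  "bidx [] = 0"
| "bidx (b # bs) = (if b then 2 ^ length bs else 0) + bidx bs"

text \<open>Semantics of a unitary M (2^n x 2^n matrix) applied to input wires ls with output
  wires rs: A |-> M A M^dagger, tensored with the identity.\<close>
definition usem :: "complex mat \<Rightarrow> 'l list \<Rightarrow> 'l list \<Rightarrow> 'l state \<Rightarrow> 'l state" where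
  "usem M ls rs st = (\<lambda>c i j.
     \<Sum>a\<in>{xs::bool list. length xs = length ls}. \<Sum>b\<in>{xs::bool list. length xs = length ls}.
       M $$ (bidx (map i rs), bidx a) * st c (setv (clr i rs) ls a) (setv (clr j rs) ls b)
       * cnj (M $$ (bidx (map j rs), bidx b)))"

definition Hmat :: "complex mat" where
  "Hmat = mat 2 2 (\<lambda>(r,s). if r = 1 \<and> s = 1 then - 1 / complex_of_real (sqrt 2)
                             else 1 / complex_of_real (sqrt 2))"

definition Smat :: "complex mat" where
  "Smat = mat 2 2 (\<lambda>(r,s). if r = 0 \<and> s = 0 then 1 else if r = 1 \<and> s = 1 then \<i> else 0)"

definition Tmat :: "complex mat" where
  "Tmat = mat 2 2 (\<lambda>(r,s). if r = 0 \<and> s = 0 then 1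
                           else if r = 1 \<and> s = 1 then exp (\<i> * complex_of_real (pi / 4)) else 0)"

text \<open>CNOT with the first wire as control and the second as target.\<close>
definition CNOTmat :: "complex mat" where
  "CNOTmat = mat 4 4 (\<lambda>(r,s). if (r < 2 \<and> s = r) \<or> (r = 2 \<and> s = 3) \<or> (r = 3 \<and> s = 2) then 1 else 0)"

fun gsem :: "qgate \<Rightarrow> 'l list \<Rightarrow> 'l list \<Rightarrow> 'l state \<Rightarrow> 'l state" where
  "gsem One ls rs st = (\<lambda>c i j. if c (hd rs) then st (c(hd rs := False)) i j else 0)"
| "gsem Zero ls rs st = (\<lambda>c i j. if c (hd rs) then 0 else st (c(hd rs := False)) i j)"
| "gsem Discard ls rs st = (\<lambda>c i j. st (c(hd ls := True)) i j + st (c(hd ls := False)) i j)"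
| "gsem New ls rs st = (\<lambda>c i j. if i (hd rs) = j (hd rs)
      then st (c(hd ls := i (hd rs))) (i(hd rs := False)) (j(hd rs := False)) else 0)"
| "gsem Meas ls rs st = (\<lambda>c i j.
      st (c(hd rs := False)) (i(hd ls := \<not> c (hd rs))) (j(hd ls := \<not> c (hd rs))))"
| "gsem Hgate ls rs st = usem Hmat ls rs st"
| "gsem Sgate ls rs st = usem Smat ls rs st"
| "gsem Tgate ls rs st = usem Tmat ls rs st"
| "gsem CNOT ls rs st = usem CNOTmat ls rs st"

text \<open>Semantics of C(X, Y), where h1 and h2 are the semantics of the circuits X, Y
  plugged into the holes [-] and {-}.\<close>
fun csem :: "('l state \<Rightarrow> 'l state) \<Rightarrow> ('l state \<Rightarrow> 'l state) \<Rightarrow> 'l circ \<Rightarrow> 'l state \<Rightarrow> 'l state" where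
  "csem h1 h2 Hole1 st = h1 st"
| "csem h1 h2 Hole2 st = h2 st"
| "csem h1 h2 (Gate g ls rs) st = gsem g ls rs st"
| "csem h1 h2 (Seq C D) st = csem h1 h2 D (csem h1 h2 C st)"
| "csem h1 h2 (If l C D) st =
     (\<lambda>c i j. csem h1 h2 C (\<lambda>c' i' j'. st (c'(l := True)) i' j') c i j
            + csem h1 h2 D (\<lambda>c' i' j'. st (c'(l := False)) i' j') c i j)"

definition unitary4 :: "complex mat \<Rightarrow> bool" where
  "unitary4 U \<longleftrightarrow> U \<in> carrier_mat 4 4 \<and> U * mat_adjoint U = 1\<^sub>m 4"

definition fill_sem :: "'l \<Rightarrow> 'l \<Rightarrow> complex mat \<Rightarrow> complex mat \<Rightarrow> 'l circ \<Rightarrow> 'l state \<Rightarrow> 'l state" where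
  "fill_sem l1 l2 U V C = csem (usem U [l1, l2] [l1, l2]) (usem V [l1, l2] [l1, l2]) C"

definition approx :: "'l \<Rightarrow> 'l \<Rightarrow> 'l env \<Rightarrow> 'l env \<Rightarrow> 'l circ \<Rightarrow> 'l circ \<Rightarrow> bool" where
  "approx l1 l2 Ga De C D \<longleftrightarrow>
     typing [l1 \<mapsto> Qbit, l2 \<mapsto> Qbit] Ga C De \<and> typing [l1 \<mapsto> Qbit, l2 \<mapsto> Qbit] Ga D De \<and>
     (\<forall>U V. unitary4 U \<longrightarrow> unitary4 V \<longrightarrow>
        (\<forall>st\<in>states Ga. \<forall>c i j. canon_idx De c i j \<longrightarrow>
            fill_sem l1 l2 U V C st c i j = fill_sem l1 l2 U V D st c i j))"

end

theory Submission
  imports Defs "HOL-Library.Function_Algebras"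
begin

(*
  Fill the holes with two-qubit unitaries and look at the mixed second difference
  C(U,V) - C(U',V) - C(U,V') + C(U',V') of the semantics. If each hole occurs at most once in C,
  an induction on the typing derivation shows that this difference is E (X y - X' y) for a
  fixed linear map E and some state y, where X, X' fill the hole that is executed last.
  Fill that hole with R = diag(1,1,1,-1) and X' = 1: then R y R - y only has the six entries
  (r,3) and (3,r), r < 3, so the values of E on such differences span at most six dimensions.
  In D = if l then ([-];{-}) else ({-};[-]) the order of the holes depends on l, so one branch
  executes the other hole last; on the input |0><3| in that branch the mixed difference of D
  is -2 (P |0><3| P* - |0><3|), where P fills the other hole. Seven permutation matrices P
  give seven linearly independent such values, contradicting C ~ D.
*)

definition scale_state :: "complex \<Rightarrow> 'l state \<Rightarrow> 'l state" where
  "scale_state a x = (\<lambda>c i j. a * x c i j)"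

definition linear_state :: "('l state \<Rightarrow> 'l state) \<Rightarrow> bool" where
  "linear_state f \<longleftrightarrow>
     (\<forall>x y. f (x + y) = f x + f y) \<and> (\<forall>a x. f (scale_state a x) = scale_state a (f x))"

lemma linear_state_add: "linear_state f \<Longrightarrow> f (x + y) = f x + f y"
  unfolding linear_state_def by blast

lemma linear_state_scale: "linear_state f \<Longrightarrow> f (scale_state a x) = scale_state a (f x)"
  unfolding linear_state_def by blast

lemma linear_state_zero: "linear_state f \<Longrightarrow> f 0 = 0"
  by (metis add.right_neutral add_left_cancel linear_state_add)

lemma linear_state_diff: "linear_state f \<Longrightarrow> f (x - y) = f x - f y"
  by (metis eq_diff_eq linear_state_add)

lemma linear_state_sum:
  assumes "linear_state f"
  shows "f (\<Sum>a\<in>A. g a) = (\<Sum>a\<in>A. f (g a))"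
proof -
  have "sum (f \<circ> g) A = f (sum g A)"
    by (rule sum_comp_morphism) (use assms in \<open>auto intro: linear_state_zero linear_state_add\<close>)
  then show ?thesis by (simp add: comp_def)
qed

lemma linear_state_id: "linear_state id"
  by (simp add: linear_state_def)

lemma linear_state_zero_map: "linear_state (\<lambda>x. 0)"
  by (simp add: linear_state_def scale_state_def fun_eq_iff)

lemma linear_state_comp: "linear_state f \<Longrightarrow> linear_state g \<Longrightarrow> linear_state (\<lambda>x. f (g x))"
  by (simp add: linear_state_def)

lemma linear_state_plus:
  "linear_state f \<Longrightarrow> linear_state g \<Longrightarrow> linear_state (\<lambda>x. f x + g x)"
  by (simp add: linear_state_def scale_state_def fun_eq_iff algebra_simps)

lemma linear_state_mixed:
  assumes "linear_state f"
  shows "f a - f b - f c + f d = f (a - b - c + d)"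
  unfolding linear_state_add[OF assms, of "a - b - c" d] linear_state_diff[OF assms, of "a - b" c]
    linear_state_diff[OF assms, of a b] ..

lemma sum_state_apply: "(\<Sum>a\<in>A. f a) c i j = (\<Sum>a\<in>A. f a c i j :: complex)"
  by (induction A rule: infinite_finite_induct) auto

lemma linear_usem: "linear_state (usem M ls rs)"
  by (auto simp: linear_state_def usem_def scale_state_def fun_eq_iff algebra_simps
      sum.distrib sum_distrib_left)

lemma gsem_unitary_gates:
  "gsem Hgate ls rs = usem Hmat ls rs" "gsem Sgate ls rs = usem Smat ls rs"
  "gsem Tgate ls rs = usem Tmat ls rs" "gsem CNOT ls rs = usem CNOTmat ls rs"
  by (simp_all add: fun_eq_iff)

lemma linear_gsem: "linear_state (gsem g ls rs)"
  by (cases g) (simp_all add: gsem_unitary_gates linear_usem,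
      auto simp: linear_state_def scale_state_def fun_eq_iff algebra_simps)

lemma csem_atoms [simp]:
  "csem h1 h2 Hole1 = h1" "csem h1 h2 Hole2 = h2" "csem h1 h2 (Gate g ls rs) = gsem g ls rs"
  by (simp_all add: fun_eq_iff)

definition bit_block :: "'l \<Rightarrow> bool \<Rightarrow> 'l state \<Rightarrow> 'l state" where
  "bit_block l b st = (\<lambda>c. st (c(l := b)))"

lemma csem_If_blocks:
  "csem h1 h2 (If l C D) st = csem h1 h2 C (bit_block l True st) + csem h1 h2 D (bit_block l False st)"
  by (simp add: fun_eq_iff bit_block_def)

declare csem.simps(5) [simp del]

lemma linear_bit_block: "linear_state (bit_block l b)"
  by (simp add: linear_state_def bit_block_def scale_state_def fun_eq_iff)

lemma linear_csem: "linear_state h1 \<Longrightarrow> linear_state h2 \<Longrightarrow> linear_state (csem h1 h2 C)"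
proof (induction C)
  case (Seq C D)
  then show ?case by (simp add: linear_state_comp)
next
  case (If l C D)
  have eq: "csem h1 h2 (If l C D) = (\<lambda>st. csem h1 h2 C (bit_block l True st) + csem h1 h2 D (bit_block l False st))"
    by (simp add: fun_eq_iff csem_If_blocks)
  have "linear_state (csem h1 h2 C)" "linear_state (csem h1 h2 D)"
    using If by simp_all
  then show ?case
    unfolding eq by (intro linear_state_plus linear_state_comp[OF _ linear_bit_block])
qed (simp_all add: linear_gsem)

lemma csem_hole1_irrelevant: "count_hole1 C = 0 \<Longrightarrow> csem h1 h2 C = csem h1' h2 C"
  by (induction C) (auto simp: csem_If_blocks)

lemma csem_hole2_irrelevant: "count_hole2 C = 0 \<Longrightarrow> csem h1 h2 C = csem h1 h2' C"
  by (induction C) (auto simp: csem_If_blocks)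

lemma csem_hole_free: "count_hole1 C = 0 \<Longrightarrow> count_hole2 C = 0 \<Longrightarrow> csem h1 h2 C = csem h1' h2' C"
  by (metis csem_hole1_irrelevant csem_hole2_irrelevant)

section \<open>Agreement on canonical indices\<close>

(* States may hold junk values outside the canonical indices of their environment; the
   semantics of a circuit only reads and only determines canonical entries. *)
definition agree_on :: "'l env \<Rightarrow> 'l state \<Rightarrow> 'l state \<Rightarrow> bool" where
  "agree_on G x y \<longleftrightarrow> (\<forall>c i j. canon_idx G c i j \<longrightarrow> x c i j = y c i j)"

definition preserves_agreement :: "'l env \<Rightarrow> 'l env \<Rightarrow> ('l state \<Rightarrow> 'l state) \<Rightarrow> bool" where
  "preserves_agreement G D f \<longleftrightarrow> (\<forall>x y. agree_on G x y \<longrightarrow> agree_on D (f x) (f y))"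

lemma preserves_agreement_id: "preserves_agreement G G id"
  by (simp add: preserves_agreement_def)

lemma preserves_agreement_zero_map: "preserves_agreement G D (\<lambda>x. 0)"
  by (simp add: preserves_agreement_def agree_on_def)

lemma preserves_agreement_comp:
  "preserves_agreement G P f \<Longrightarrow> preserves_agreement P D g \<Longrightarrow> preserves_agreement G D (\<lambda>x. g (f x))"
  unfolding preserves_agreement_def by blast

lemma preserves_agreementI:
  "(\<And>x y c i j. agree_on G x y \<Longrightarrow> canon_idx D c i j \<Longrightarrow> f x c i j = f y c i j) \<Longrightarrow>
    preserves_agreement G D f"
  unfolding preserves_agreement_def agree_on_def by blast

lemma preserves_agreementD:
  "preserves_agreement G D f \<Longrightarrow> agree_on G x y \<Longrightarrow> canon_idx D c i j \<Longrightarrow> f x c i j = f y c i j"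
  unfolding preserves_agreement_def agree_on_def by blast

lemma preserves_agreement_plus:
  "preserves_agreement G D f \<Longrightarrow> preserves_agreement G D g \<Longrightarrow> preserves_agreement G D (\<lambda>x. f x + g x)"
  by (rule preserves_agreementI) (simp add: preserves_agreementD)

lemma setv_canon: "canon A f \<Longrightarrow> set xs \<subseteq> A \<Longrightarrow> canon A (setv f xs bs)"
  by (induction f xs bs rule: setv.induct) (auto simp: canon_def)

lemma clr_apply: "clr f xs z \<longleftrightarrow> z \<notin> set xs \<and> f z"
  by (induction xs) (auto simp: clr_def)

lemma usem_preserves_agreement:
  fixes G D :: "'l env"
  assumes "labels_of D Bit \<subseteq> labels_of G Bit" "labels_of D Qbit - set rs \<subseteq> labels_of G Qbit"
    "set ls \<subseteq> labels_of G Qbit"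
  shows "preserves_agreement G D (usem M ls rs)"
proof (rule preserves_agreementI)
  fix x y :: "'l state" and c i j :: "'l \<Rightarrow> bool"
  assume agree: "agree_on G x y" and idx: "canon_idx D c i j"
  have "canon (labels_of G Qbit) (setv (clr f rs) ls a)" if "canon (labels_of D Qbit) f" for f a
    using that assms(2) by (intro setv_canon[OF _ assms(3)]) (auto simp: canon_def clr_apply)
  moreover have "canon (labels_of G Bit) c"
    using idx assms(1) by (auto simp: canon_idx_def canon_def)
  ultimately have "canon_idx G c (setv (clr i rs) ls a) (setv (clr j rs) ls b)" for a b
    using idx by (simp add: canon_idx_def)
  then show "usem M ls rs x c i j = usem M ls rs y c i j"
    unfolding usem_def using agree by (intro sum.cong refl) (auto simp: agree_on_def)
qed

lemma labels_of_upd: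
  "labels_of (G(x \<mapsto> B')) B = (if B' = B then insert x (labels_of G B) else labels_of G B - {x})"
  by (auto simp: labels_of_def)

lemma canon_idx_drop_Bit: "canon_idx (G(x \<mapsto> Bit)) c i j \<Longrightarrow> canon_idx G (c(x := False)) i j"
  by (auto simp: canon_idx_def canon_def labels_of_def)

lemma canon_idx_drop_Qbit:
  "canon_idx (G(x \<mapsto> Qbit)) c i j \<Longrightarrow> canon_idx G c (i(x := False)) (j(x := False))"
  by (auto simp: canon_idx_def canon_def labels_of_def)

lemma canon_idx_add_Bit: "x \<notin> dom G \<Longrightarrow> canon_idx G c i j \<Longrightarrow> canon_idx (G(x \<mapsto> Bit)) (c(x := b)) i j"
  by (auto simp: canon_idx_def canon_def labels_of_def)

lemma canon_idx_add_Qbit: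
  "x \<notin> dom G \<Longrightarrow> canon_idx G c i j \<Longrightarrow> canon_idx (G(x \<mapsto> Qbit)) c (i(x := b)) (j(x := b'))"
  by (auto simp: canon_idx_def canon_def labels_of_def)

lemma classical_gsem_preserves_agreement:
  fixes Xi :: "'l env"
  assumes "g \<in> {Zero, One, Discard, New, Meas}"
    and "length ls = length (gate_in g)" "length rs = length (gate_out g)" "set ls \<inter> dom Xi = {}"
  shows "preserves_agreement (Xi ++ map_of (zip ls (gate_in g))) (Xi ++ map_of (zip rs (gate_out g)))
           (gsem g ls rs)"
proof (rule preserves_agreementI)
  fix x y :: "'l state" and c i j :: "'l \<Rightarrow> bool"
  assume "agree_on (Xi ++ map_of (zip ls (gate_in g))) x y"
  then have agree: "x c' i' j' = y c' i' j'" if "canon_idx (Xi ++ map_of (zip ls (gate_in g))) c' i' j'" for c' i' j'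
    using that by (simp add: agree_on_def)
  assume idx: "canon_idx (Xi ++ map_of (zip rs (gate_out g))) c i j"
  from assms(1) consider "g = Zero \<or> g = One" | "g = Discard" | "g = New" | "g = Meas"
    by blast
  then show "gsem g ls rs x c i j = gsem g ls rs y c i j"
  proof cases
    case 1
    then obtain r where "ls = []" "rs = [r]"
      using assms(2,3) by (auto simp: length_Suc_conv)
    with 1 idx show ?thesis
      using agree[of "c(r := False)" i j] canon_idx_drop_Bit[of Xi r c i j] by auto
  next
    case 2
    then obtain v where "ls = [v]" "rs = []"
      using assms(2,3) by (auto simp: length_Suc_conv)
    with 2 idx assms(4) show ?thesis
      using agree[of "c(v := _)" i j] canon_idx_add_Bit[of v Xi c i j] by simp
  next
    case 3
    then obtain v r where "ls = [v]" "rs = [r]"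
      using assms(2,3) by (auto simp: length_Suc_conv)
    with 3 idx assms(4) show ?thesis
      using agree[of "c(v := _)" "i(r := False)" "j(r := False)"] canon_idx_drop_Qbit[of Xi r c i j]
        canon_idx_add_Bit[of v Xi c "i(r := False)" "j(r := False)"] by simp
  next
    case 4
    then obtain v r where "ls = [v]" "rs = [r]"
      using assms(2,3) by (auto simp: length_Suc_conv)
    with 4 idx assms(4) show ?thesis
      using agree[of "c(r := False)" "i(v := _)" "j(v := _)"] canon_idx_drop_Bit[of Xi r c i j]
        canon_idx_add_Qbit[of v Xi "c(r := False)" i j] by simp
  qed
qed

lemma gsem_preserves_agreement:
  fixes Xi :: "'l env"
  assumes "length ls = length (gate_in g)" "length rs = length (gate_out g)"
    "set ls \<inter> dom Xi = {}" "set rs \<inter> dom Xi = {}"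
  shows "preserves_agreement (Xi ++ map_of (zip ls (gate_in g))) (Xi ++ map_of (zip rs (gate_out g)))
           (gsem g ls rs)"
proof (cases "g \<in> {Hgate, Sgate, Tgate, CNOT}")
  case True
  then show ?thesis
    using assms
    by (auto simp: gsem_unitary_gates length_Suc_conv labels_of_upd intro!: usem_preserves_agreement)
      (auto simp: labels_of_def)
next
  case False
  then have "g \<in> {Zero, One, Discard, New, Meas}"
    by (cases g) auto
  then show ?thesis
    using assms(1-3) by (rule classical_gsem_preserves_agreement)
qed

lemma bit_block_preserves_agreement:
  "l \<notin> dom G \<Longrightarrow> preserves_agreement (G(l \<mapsto> Bit)) G (bit_block l b)"
  by (rule preserves_agreementI) (simp add: bit_block_def agree_on_def canon_idx_add_Bit)

lemma csem_preserves_agreement: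
  fixes Th Ga De :: "'l env"
  assumes "typing Th Ga C De" "preserves_agreement Th Th h1" "preserves_agreement Th Th h2"
  shows "preserves_agreement Ga De (csem h1 h2 C)"
  using assms(1)
proof (induction rule: typing.induct)
  case (gate Xi ls g rs)
  then show ?case by (simp add: gsem_preserves_agreement)
next
  case (seq Ga C Ps D De)
  then show ?case by (simp add: preserves_agreement_comp)
next
  case (ifte Ga D De E l)
  have eq: "csem h1 h2 (If l D E) = (\<lambda>st. csem h1 h2 D (bit_block l True st) + csem h1 h2 E (bit_block l False st))"
    by (simp add: fun_eq_iff csem_If_blocks)
  show ?case
    unfolding eq using ifte
    by (intro preserves_agreement_plus preserves_agreement_comp[OF bit_block_preserves_agreement])
qed (use assms in simp_all)

section \<open>Differences in the hole fillings\<close>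

(* Both holes get the same filling; this is only used for circuits with at most one hole. *)
definition hole_difference ::
  "('l state \<Rightarrow> 'l state) \<Rightarrow> ('l state \<Rightarrow> 'l state) \<Rightarrow> 'l circ \<Rightarrow> 'l state \<Rightarrow> 'l state" where
  "hole_difference h h' C st = csem h h C st - csem h' h' C st"

lemma hole_difference_hole_free:
  "count_hole1 C = 0 \<Longrightarrow> count_hole2 C = 0 \<Longrightarrow> hole_difference h h' C st = 0"
  unfolding hole_difference_def by (metis csem_hole_free diff_self)

lemma hole_difference_If:
  "hole_difference h h' (If l C D) st =
     hole_difference h h' C (bit_block l True st) + hole_difference h h' D (bit_block l False st)"
  by (simp add: hole_difference_def csem_If_blocks)

lemma hole_difference_Seq_hole_free_right:
  assumes "count_hole1 D = 0" "count_hole2 D = 0"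
  shows "hole_difference h h' (Seq C D) st = csem id id D (hole_difference h h' C st)"
proof -
  have seq: "csem x x (Seq C D) st = csem id id D (csem x x C st)" for x
    using csem_hole_free[OF assms, of x x id id] by simp
  show ?thesis
    unfolding hole_difference_def seq
    by (rule linear_state_diff[OF linear_csem[OF linear_state_id linear_state_id], symmetric])
qed

lemma hole_difference_Seq_hole_free_left:
  assumes "count_hole1 C = 0" "count_hole2 C = 0"
  shows "hole_difference h h' (Seq C D) st = hole_difference h h' D (csem id id C st)"
proof -
  have seq: "csem x x (Seq C D) st = csem x x D (csem id id C st)" for x
    using csem_hole_free[OF assms, of x x id id] by simp
  show ?thesis
    unfolding hole_difference_def seq ..
qed

definition factors_difference ::
  "'l env \<Rightarrow> 'l env \<Rightarrow> 'l circ \<Rightarrow> ('l state \<Rightarrow> 'l state) \<Rightarrow> bool" where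
  "factors_difference Th De C E \<longleftrightarrow> linear_state E \<and> preserves_agreement Th De E \<and>
     (\<forall>h h' st. \<exists>y. hole_difference h h' C st = E (h y - h' y))"

lemma linear_preserving_post_hole_free:
  assumes "linear_state E" "preserves_agreement Th Ps E" "typing Th Ps D De"
  shows "linear_state (\<lambda>x. csem id id D (E x))" "preserves_agreement Th De (\<lambda>x. csem id id D (E x))"
proof -
  show "linear_state (\<lambda>x. csem id id D (E x))"
    by (rule linear_state_comp[OF linear_csem[OF linear_state_id linear_state_id] assms(1)])
  show "preserves_agreement Th De (\<lambda>x. csem id id D (E x))"
    by (rule preserves_agreement_comp[OF assms(2) csem_preserves_agreement[OF assms(3)]])
      (simp_all add: preserves_agreement_id)
qed

lemma factors_difference_Seq_hole_free_right:
  assumes "factors_difference Th Ps C E" "typing Th Ps D De" "count_hole1 D = 0" "count_hole2 D = 0"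
  shows "factors_difference Th De (Seq C D) (\<lambda>x. csem id id D (E x))"
proof -
  from assms(1) have E: "linear_state E" "preserves_agreement Th Ps E"
    and diff: "\<forall>h h' st. \<exists>y. hole_difference h h' C st = E (h y - h' y)"
    by (simp_all add: factors_difference_def)
  have "\<exists>y. hole_difference h h' (Seq C D) st = csem id id D (E (h y - h' y))" for h h' st
    unfolding hole_difference_Seq_hole_free_right[OF assms(3,4)] using diff by metis
  then show ?thesis
    using linear_preserving_post_hole_free[OF E assms(2)] by (simp add: factors_difference_def)
qed

lemma factors_difference_Seq_hole_free_left:
  "factors_difference Th De D E \<Longrightarrow> count_hole1 C = 0 \<Longrightarrow> count_hole2 C = 0 \<Longrightarrow>
    factors_difference Th De (Seq C D) E"
  by (simp add: factors_difference_def hole_difference_Seq_hole_free_left)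

lemma factors_difference_If:
  "factors_difference Th De C E \<Longrightarrow> count_hole1 D = 0 \<Longrightarrow> count_hole2 D = 0 \<Longrightarrow>
    factors_difference Th De (If l C D) E"
  "factors_difference Th De D E \<Longrightarrow> count_hole1 C = 0 \<Longrightarrow> count_hole2 C = 0 \<Longrightarrow>
    factors_difference Th De (If l C D) E"
  by (simp_all add: factors_difference_def hole_difference_If hole_difference_hole_free)

lemma factors_difference_exists:
  fixes Th Ga De :: "'l env"
  shows "typing Th Ga C De \<Longrightarrow> count_hole1 C + count_hole2 C \<le> 1 \<Longrightarrow> \<exists>E. factors_difference Th De C E"
proof (induction rule: typing.induct)
  case (seq Ga C Ps D De)
  show ?case
  proof (cases "count_hole1 D + count_hole2 D = 0")
    case True
    then obtain E where "factors_difference Th Ps C E"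
      using seq by auto
    then show ?thesis
      using factors_difference_Seq_hole_free_right[OF _ seq.hyps(2)] True by auto
  next
    case False
    then have "count_hole1 C = 0" "count_hole2 C = 0"
      using seq.prems by auto
    moreover obtain E where "factors_difference Th De D E"
      using seq False by auto
    ultimately show ?thesis
      using factors_difference_Seq_hole_free_left by blast
  qed
next
  case (ifte Ga C De D l)
  show ?case
  proof (cases "count_hole1 D + count_hole2 D = 0")
    case True
    then obtain E where "factors_difference Th De C E"
      using ifte by auto
    then have "factors_difference Th De (If l C D) E"
      using True by (intro factors_difference_If(1)) simp_all
    then show ?thesis by blast
  next
    case False
    then have "count_hole1 C = 0" "count_hole2 C = 0"
      using ifte.prems by auto
    moreover obtain E where "factors_difference Th De D E"
      using ifte False by auto
    ultimately have "factors_difference Th De (If l C D) E"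
      by (intro factors_difference_If(2))
    then show ?thesis by blast
  qed
qed (use linear_state_id preserves_agreement_id linear_state_zero_map preserves_agreement_zero_map in
      \<open>fastforce simp: factors_difference_def hole_difference_def\<close>)+

definition mixed_difference ::
  "('l state \<Rightarrow> 'l state) \<Rightarrow> ('l state \<Rightarrow> 'l state) \<Rightarrow> ('l state \<Rightarrow> 'l state) \<Rightarrow> ('l state \<Rightarrow> 'l state)
    \<Rightarrow> 'l circ \<Rightarrow> 'l state \<Rightarrow> 'l state" where
  "mixed_difference h1 h1' h2 h2' C st =
     csem h1 h2 C st - csem h1' h2 C st - csem h1 h2' C st + csem h1' h2' C st"

lemma mixed_difference_one_hole_kind:
  assumes "count_hole1 C = 0 \<or> count_hole2 C = 0"
  shows "mixed_difference h1 h1' h2 h2' C st = 0"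
  using assms
proof
  assume "count_hole1 C = 0"
  then show ?thesis
    using csem_hole1_irrelevant[of C h1 h2 h1'] csem_hole1_irrelevant[of C h1 h2' h1']
    by (simp add: mixed_difference_def)
next
  assume "count_hole2 C = 0"
  then show ?thesis
    using csem_hole2_irrelevant[of C h1 h2 h2'] csem_hole2_irrelevant[of C h1' h2 h2']
    by (simp add: mixed_difference_def)
qed

lemma mixed_difference_If:
  "mixed_difference h1 h1' h2 h2' (If l C D) st =
     mixed_difference h1 h1' h2 h2' C (bit_block l True st) + mixed_difference h1 h1' h2 h2' D (bit_block l False st)"
  by (simp add: mixed_difference_def csem_If_blocks algebra_simps)

lemma mixed_difference_Seq_hole_free_right:
  assumes "count_hole1 D = 0" "count_hole2 D = 0"
  shows "mixed_difference h1 h1' h2 h2' (Seq C D) st = csem id id D (mixed_difference h1 h1' h2 h2' C st)"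
proof -
  have seq: "csem x y (Seq C D) st = csem id id D (csem x y C st)" for x y
    using csem_hole_free[OF assms, of x y id id] by simp
  show ?thesis
    unfolding mixed_difference_def seq
    by (rule linear_state_mixed[OF linear_csem[OF linear_state_id linear_state_id]])
qed

lemma mixed_difference_Seq_hole_free_left:
  assumes "count_hole1 C = 0" "count_hole2 C = 0"
  shows "mixed_difference h1 h1' h2 h2' (Seq C D) st = mixed_difference h1 h1' h2 h2' D (csem id id C st)"
proof -
  have seq: "csem x y (Seq C D) st = csem x y D (csem id id C st)" for x y
    using csem_hole_free[OF assms, of x y id id] by simp
  show ?thesis
    unfolding mixed_difference_def seq ..
qed

lemma mixed_difference_Seq_hole1_first:
  assumes "count_hole2 C = 0" "count_hole1 D = 0" "linear_state h2" "linear_state h2'"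
  shows "mixed_difference h1 h1' h2 h2' (Seq C D) st = hole_difference h2 h2' D (hole_difference h1 h1' C st)"
proof -
  have seq: "csem x y (Seq C D) st = csem y y D (csem x x C st)" for x y
    using csem_hole2_irrelevant[OF assms(1), of x y x] csem_hole1_irrelevant[OF assms(2), of x y y] by simp
  have lin: "linear_state (csem h2 h2 D)" "linear_state (csem h2' h2' D)"
    using assms(3,4) by (simp_all add: linear_csem)
  show ?thesis
    unfolding mixed_difference_def hole_difference_def seq
      linear_state_diff[OF lin(1)] linear_state_diff[OF lin(2)]
    by (simp add: algebra_simps)
qed

lemma mixed_difference_Seq_hole2_first:
  assumes "count_hole1 C = 0" "count_hole2 D = 0" "linear_state h1" "linear_state h1'"
  shows "mixed_difference h1 h1' h2 h2' (Seq C D) st = hole_difference h1 h1' D (hole_difference h2 h2' C st)"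
proof -
  have seq: "csem x y (Seq C D) st = csem x x D (csem y y C st)" for x y
    using csem_hole1_irrelevant[OF assms(1), of x y y] csem_hole2_irrelevant[OF assms(2), of x y x] by simp
  have lin: "linear_state (csem h1 h1 D)" "linear_state (csem h1' h1' D)"
    using assms(3,4) by (simp_all add: linear_csem)
  show ?thesis
    unfolding mixed_difference_def hole_difference_def seq
      linear_state_diff[OF lin(1)] linear_state_diff[OF lin(2)]
    by (simp add: algebra_simps)
qed

(* The flag b selects the hole that is executed last: [-] if b holds, {-} otherwise. *)
definition factors_mixed_difference ::
  "'l env \<Rightarrow> 'l env \<Rightarrow> 'l circ \<Rightarrow> bool \<Rightarrow> ('l state \<Rightarrow> 'l state) \<Rightarrow> bool" where
  "factors_mixed_difference Th De C b E \<longleftrightarrow> linear_state E \<and> preserves_agreement Th De E \<and>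
     (\<forall>h1 h1' h2 h2' st. linear_state h1 \<longrightarrow> linear_state h1' \<longrightarrow> linear_state h2 \<longrightarrow> linear_state h2' \<longrightarrow>
        (\<exists>y. mixed_difference h1 h1' h2 h2' C st = E (if b then h1 y - h1' y else h2 y - h2' y)))"

lemma factors_mixed_difference_one_hole_kind:
  "count_hole1 C = 0 \<or> count_hole2 C = 0 \<Longrightarrow> factors_mixed_difference Th De C b (\<lambda>x. 0)"
  by (simp add: factors_mixed_difference_def mixed_difference_one_hole_kind linear_state_zero_map
      preserves_agreement_zero_map)

lemma factors_mixed_difference_Seq_hole_free_right:
  assumes "factors_mixed_difference Th Ps C b E" "typing Th Ps D De" "count_hole1 D = 0" "count_hole2 D = 0"
  shows "factors_mixed_difference Th De (Seq C D) b (\<lambda>x. csem id id D (E x))"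
proof -
  from assms(1) have E: "linear_state E" "preserves_agreement Th Ps E"
    and mixed: "\<forall>h1 h1' h2 h2' st. linear_state h1 \<longrightarrow> linear_state h1' \<longrightarrow> linear_state h2 \<longrightarrow>
      linear_state h2' \<longrightarrow>
        (\<exists>y. mixed_difference h1 h1' h2 h2' C st = E (if b then h1 y - h1' y else h2 y - h2' y))"
    by (simp_all add: factors_mixed_difference_def)
  have "\<exists>y. mixed_difference h1 h1' h2 h2' (Seq C D) st =
      csem id id D (E (if b then h1 y - h1' y else h2 y - h2' y))"
    if "linear_state h1" "linear_state h1'" "linear_state h2" "linear_state h2'" for h1 h1' h2 h2' st
    unfolding mixed_difference_Seq_hole_free_right[OF assms(3,4)] using mixed that by metis
  then show ?thesis
    using linear_preserving_post_hole_free[OF E assms(2)] by (simp add: factors_mixed_difference_def)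
qed

lemma factors_mixed_difference_Seq_hole_free_left:
  "factors_mixed_difference Th De D b E \<Longrightarrow> count_hole1 C = 0 \<Longrightarrow> count_hole2 C = 0 \<Longrightarrow>
    factors_mixed_difference Th De (Seq C D) b E"
  by (simp add: factors_mixed_difference_def mixed_difference_Seq_hole_free_left)

lemma factors_mixed_difference_Seq_separated:
  "factors_difference Th De D E \<Longrightarrow> count_hole2 C = 0 \<Longrightarrow> count_hole1 D = 0 \<Longrightarrow>
    factors_mixed_difference Th De (Seq C D) False E"
  "factors_difference Th De D E \<Longrightarrow> count_hole1 C = 0 \<Longrightarrow> count_hole2 D = 0 \<Longrightarrow>
    factors_mixed_difference Th De (Seq C D) True E"
  by (simp_all add: factors_difference_def factors_mixed_difference_def
      mixed_difference_Seq_hole1_first mixed_difference_Seq_hole2_first)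

lemma factors_mixed_difference_If:
  "factors_mixed_difference Th De C b E \<Longrightarrow> count_hole1 D = 0 \<or> count_hole2 D = 0 \<Longrightarrow>
    factors_mixed_difference Th De (If l C D) b E"
  "factors_mixed_difference Th De D b E \<Longrightarrow> count_hole1 C = 0 \<or> count_hole2 C = 0 \<Longrightarrow>
    factors_mixed_difference Th De (If l C D) b E"
  by (simp_all add: factors_mixed_difference_def mixed_difference_If mixed_difference_one_hole_kind)

lemma factors_mixed_difference_exists:
  fixes Th Ga De :: "'l env"
  shows "typing Th Ga C De \<Longrightarrow> count_hole1 C \<le> 1 \<Longrightarrow> count_hole2 C \<le> 1 \<Longrightarrow>
    \<exists>b E. factors_mixed_difference Th De C b E"
proof (induction rule: typing.induct)
  case (seq Ga C Ps D De)
  consider (D_free) "count_hole1 D = 0" "count_hole2 D = 0"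
    | (C_free) "count_hole1 C = 0" "count_hole2 C = 0"
    | (hole1_first) "count_hole2 C = 0" "count_hole1 D = 0"
    | (hole2_first) "count_hole1 C = 0" "count_hole2 D = 0"
    using seq.prems by fastforce
  then show ?case
  proof cases
    case D_free
    then obtain b E where "factors_mixed_difference Th Ps C b E"
      using seq by auto
    then have "factors_mixed_difference Th De (Seq C D) b (\<lambda>x. csem id id D (E x))"
      using seq.hyps(2) D_free by (rule factors_mixed_difference_Seq_hole_free_right)
    then show ?thesis by blast
  next
    case C_free
    then obtain b E where "factors_mixed_difference Th De D b E"
      using seq by auto
    then have "factors_mixed_difference Th De (Seq C D) b E"
      using C_free by (rule factors_mixed_difference_Seq_hole_free_left)
    then show ?thesis by blast
  next
    case hole1_first
    then obtain E where "factors_difference Th De D E"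
      using factors_difference_exists[OF seq.hyps(2)] seq.prems by fastforce
    then have "factors_mixed_difference Th De (Seq C D) False E"
      using hole1_first by (rule factors_mixed_difference_Seq_separated(1))
    then show ?thesis by blast
  next
    case hole2_first
    then obtain E where "factors_difference Th De D E"
      using factors_difference_exists[OF seq.hyps(2)] seq.prems by fastforce
    then have "factors_mixed_difference Th De (Seq C D) True E"
      using hole2_first by (rule factors_mixed_difference_Seq_separated(2))
    then show ?thesis by blast
  qed
next
  case (ifte Ga C De D l)
  show ?case
  proof (cases "count_hole1 D = 0 \<or> count_hole2 D = 0")
    case True
    then obtain b E where "factors_mixed_difference Th De C b E"
      using ifte by fastforce
    then have "factors_mixed_difference Th De (If l C D) b E"
      using True by (rule factors_mixed_difference_If(1))
    then show ?thesis by blast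
  next
    case False
    then have "count_hole1 C = 0 \<or> count_hole2 C = 0"
      using ifte.prems by auto
    moreover obtain b E where "factors_mixed_difference Th De D b E"
      using ifte False by fastforce
    ultimately have "factors_mixed_difference Th De (If l C D) b E"
      by (intro factors_mixed_difference_If(2))
    then show ?thesis by blast
  qed
qed (rule exI[of _ False], rule exI[of _ "\<lambda>x. 0"], rule factors_mixed_difference_one_hole_kind, simp)+

lemma det_zero_column:
  fixes A :: "'a :: field mat"
  assumes A: "A \<in> carrier_mat m m" and "k < m" "\<And>i. i < m \<Longrightarrow> A $$ (i, k) = 0"
  shows "det A = 0"
proof -
  have "A *\<^sub>v unit_vec m k = 0\<^sub>v m"
    using assms by (intro eq_vecI) (simp_all add: scalar_prod_right_unit)
  moreover have "unit_vec m k \<noteq> (0\<^sub>v m :: 'a vec)"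
    using assms(2) by (metis index_unit_vec(1) index_zero_vec(1) zero_neq_one)
  ultimately show ?thesis
    using det_0_iff_vec_prod_zero_field[OF A] unit_vec_carrier by blast
qed

lemma identity_factorization_card_le:
  fixes a :: "'k \<Rightarrow> 'j \<Rightarrow> 'a :: field" and b :: "'j \<Rightarrow> 'k \<Rightarrow> 'a"
  assumes "finite J" "finite K"
    and factor: "\<And>k k'. k \<in> K \<Longrightarrow> k' \<in> K \<Longrightarrow> (\<Sum>j\<in>J. a k j * b j k') = (if k = k' then 1 else 0)"
  shows "card K \<le> card J"
proof (rule ccontr)
  define n m where "n = card J" and "m = card K"
  assume "\<not> card K \<le> card J"
  then have less: "n < m"
    by (simp add: n_def m_def)
  obtain \<phi> where \<phi>: "bij_betw \<phi> {0..<n} J"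
    using ex_bij_betw_nat_finite[OF assms(1)] n_def by blast
  obtain \<psi> where \<psi>: "bij_betw \<psi> {0..<m} K"
    using ex_bij_betw_nat_finite[OF assms(2)] m_def by blast
  define A where "A = mat m m (\<lambda>(k, j). if j < n then a (\<psi> k) (\<phi> j) else 0)"
  define B where "B = mat m m (\<lambda>(j, k). if j < n then b (\<phi> j) (\<psi> k) else 0)"
  have A: "A \<in> carrier_mat m m" and B: "B \<in> carrier_mat m m"
    by (simp_all add: A_def B_def)
  have "A * B = 1\<^sub>m m"
  proof (rule eq_matI)
    fix k k' assume "k < dim_row (1\<^sub>m m :: 'a mat)" "k' < dim_col (1\<^sub>m m :: 'a mat)"
    then have kk': "k < m" "k' < m" by simp_all
    have "(A * B) $$ (k, k') = (\<Sum>j\<in>{0..<m}. A $$ (k, j) * B $$ (j, k'))"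
      using A B kk' by (simp add: scalar_prod_def)
    also have "\<dots> = (\<Sum>j\<in>{0..<n}. a (\<psi> k) (\<phi> j) * b (\<phi> j) (\<psi> k'))"
      using less kk'
      by (intro sum.mono_neutral_cong_right) (auto simp: A_def B_def)
    also have "\<dots> = (\<Sum>x\<in>J. a (\<psi> k) x * b x (\<psi> k'))"
      using sum.reindex_bij_betw[OF \<phi>, of "\<lambda>x. a (\<psi> k) x * b x (\<psi> k')"] by simp
    also have "\<dots> = (if k = k' then 1 else 0)"
    proof -
      have "\<psi> k \<in> K" "\<psi> k' \<in> K" "\<psi> k = \<psi> k' \<longleftrightarrow> k = k'"
        using \<psi> kk' by (auto simp: bij_betw_def inj_on_def)
      then show ?thesis
        using factor by simp
    qed
    finally show "(A * B) $$ (k, k') = 1\<^sub>m m $$ (k, k')"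
      using kk' by simp
  qed (simp_all add: A_def B_def)
  then have "det A * det B = 1"
    using det_mult[OF A B] by simp
  moreover have "det A = 0"
    using A less by (rule det_zero_column) (use less in \<open>simp add: A_def\<close>)
  ultimately show False
    by simp
qed

lemma sum_mult_delta:
  fixes f :: "'b \<Rightarrow> 'a :: semiring_0"
  assumes "finite A"
  shows "(\<Sum>x\<in>A. f x * (if x = k then c else 0)) = (if k \<in> A then f k * c else 0)"
    and "(\<Sum>x\<in>A. f x * (if k = x then c else 0)) = (if k \<in> A then f k * c else 0)"
proof -
  have "(\<Sum>x\<in>A. f x * (if x = k then c else 0)) = (\<Sum>x\<in>A. if x = k then f x * c else 0)"
    "(\<Sum>x\<in>A. f x * (if k = x then c else 0)) = (\<Sum>x\<in>A. if k = x then f x * c else 0)"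
    by (intro sum.cong; auto)+
  with assms show "(\<Sum>x\<in>A. f x * (if x = k then c else 0)) = (if k \<in> A then f k * c else 0)"
    "(\<Sum>x\<in>A. f x * (if k = x then c else 0)) = (if k \<in> A then f k * c else 0)"
    by simp_all
qed

lemma less_4_cases: "r < (4 :: nat) \<Longrightarrow> r = 0 \<or> r = 1 \<or> r = 2 \<or> r = 3"
  by arith

lemma lessThan_4: "{..<4} = {0, 1, 2, 3 :: nat}"
  by (auto dest: less_4_cases)

lemma sum_less_4: "(\<Sum>p<4. f p) = f 0 + f 1 + f 2 + f (3 :: nat)"
  by (simp add: lessThan_Suc numeral_eq_Suc ac_simps)

lemma index_mult_mat_4:
  "A \<in> carrier_mat 4 4 \<Longrightarrow> B \<in> carrier_mat 4 4 \<Longrightarrow> r < 4 \<Longrightarrow> k < 4 \<Longrightarrow>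
    (A * B) $$ (r, k) = (\<Sum>p<4. A $$ (r, p) * B $$ (p, k))"
  by (simp add: scalar_prod_def atLeast0LessThan)

lemma mat_adjoint_index: "i < dim_col A \<Longrightarrow> j < dim_row A \<Longrightarrow> mat_adjoint A $$ (i, j) = cnj (A $$ (j, i))"
  by (simp add: mat_adjoint_def mat_of_rows_def)

lemma unitary4I:
  assumes "U \<in> carrier_mat 4 4"
    and "\<And>i j. i < 4 \<Longrightarrow> j < 4 \<Longrightarrow> (\<Sum>s<4. U $$ (i, s) * cnj (U $$ (j, s))) = (if i = j then 1 else 0)"
  shows "unitary4 U"
  unfolding unitary4_def
proof
  show "U * mat_adjoint U = 1\<^sub>m 4"
  proof (rule eq_matI)
    fix i j assume "i < dim_row (1\<^sub>m 4 :: complex mat)" "j < dim_col (1\<^sub>m 4 :: complex mat)"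
    then have ij: "i < 4" "j < 4" by simp_all
    have "(U * mat_adjoint U) $$ (i, j) = (\<Sum>s\<in>{0..<4}. U $$ (i, s) * mat_adjoint U $$ (s, j))"
      using assms(1) ij by (simp add: scalar_prod_def mat_adjoint_def)
    also have "\<dots> = (\<Sum>s<4. U $$ (i, s) * cnj (U $$ (j, s)))"
      using assms(1) ij by (intro sum.cong) (auto simp: mat_adjoint_index)
    finally show "(U * mat_adjoint U) $$ (i, j) = 1\<^sub>m 4 $$ (i, j)"
      using assms(2) ij by simp
  qed (use assms(1) in \<open>simp_all add: mat_adjoint_def\<close>)
qed fact

definition Rmat :: "complex mat" where
  "Rmat = mat 4 4 (\<lambda>(r, s). if r = s then (if r = 3 then - 1 else 1) else 0)"

lemma Rmat_index: "r < 4 \<Longrightarrow> s < 4 \<Longrightarrow> Rmat $$ (r, s) = (if r = s then (if r = 3 then - 1 else 1) else 0)"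
  by (simp add: Rmat_def)

lemma Rmat_first_last_column:
  "r < 4 \<Longrightarrow> Rmat $$ (r, 0) = (if r = 0 then 1 else 0)"
  "r < 4 \<Longrightarrow> Rmat $$ (r, 3) = (if r = 3 then - 1 else 0)"
  by (simp_all add: Rmat_index)

lemma mult_Rmat_columns:
  fixes M :: "complex mat"
  assumes "M \<in> carrier_mat 4 4" "r < 4"
  shows "(M * Rmat) $$ (r, 0) = M $$ (r, 0)" "(M * Rmat) $$ (r, 3) = - M $$ (r, 3)"
proof -
  have R: "Rmat \<in> carrier_mat 4 4"
    by (simp add: Rmat_def)
  have "(M * Rmat) $$ (r, k) = (\<Sum>p<4. M $$ (r, p) * (if p = k then Rmat $$ (k, k) else 0))"
    if "k < 4" for k
    unfolding index_mult_mat_4[OF assms(1) R assms(2) that]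
    using that by (intro sum.cong) (simp_all add: Rmat_index)
  then show "(M * Rmat) $$ (r, 0) = M $$ (r, 0)" "(M * Rmat) $$ (r, 3) = - M $$ (r, 3)"
    by (simp_all add: sum_mult_delta Rmat_index)
qed

lemma unitary_Rmat: "unitary4 Rmat"
proof (rule unitary4I)
  fix i j :: nat assume ij: "i < 4" "j < 4"
  have "(\<Sum>s<4. Rmat $$ (i, s) * cnj (Rmat $$ (j, s))) = (\<Sum>s<4. if s = i then (if i = j then 1 else 0) else 0)"
    using ij by (intro sum.cong) (simp_all add: Rmat_index)
  also have "\<dots> = (if i = j then 1 else 0)"
    using ij by simp
  finally show "(\<Sum>s<4. Rmat $$ (i, s) * cnj (Rmat $$ (j, s))) = (if i = j then 1 else 0)" .
qed (simp add: Rmat_def)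

lemma unitary_one_mat: "unitary4 (1\<^sub>m 4)"
proof (rule unitary4I)
  fix i j :: nat assume ij: "i < 4" "j < 4"
  have "(\<Sum>s<4. 1\<^sub>m 4 $$ (i, s) * cnj (1\<^sub>m 4 $$ (j, s))) = (\<Sum>s<4. if s = i then (if i = j then 1 else 0) else 0 :: complex)"
    using ij by (intro sum.cong) auto
  also have "\<dots> = (if i = j then 1 else 0)"
    using ij by simp
  finally show "(\<Sum>s<4. 1\<^sub>m 4 $$ (i, s) * cnj (1\<^sub>m 4 $$ (j, s))) = (if i = j then 1 else 0)" .
qed simp

definition perm_mat :: "nat list \<Rightarrow> complex mat" where
  "perm_mat \<sigma> = mat 4 4 (\<lambda>(r, s). if r = \<sigma> ! s then 1 else 0)"

lemma perm_mat_index: "r < 4 \<Longrightarrow> s < 4 \<Longrightarrow> perm_mat \<sigma> $$ (r, s) = (if r = \<sigma> ! s then 1 else 0)"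
  by (simp add: perm_mat_def)

lemma unitary_perm_mat:
  assumes "distinct \<sigma>" "set \<sigma> = {..<4}"
  shows "unitary4 (perm_mat \<sigma>)"
proof (rule unitary4I)
  have len: "length \<sigma> = 4"
    using distinct_card[OF assms(1)] assms(2) by simp
  fix i j :: nat assume ij: "i < 4" "j < 4"
  obtain t where t: "t < 4" "\<sigma> ! t = i" and unique: "\<And>s. s < 4 \<Longrightarrow> \<sigma> ! s = i \<Longrightarrow> s = t"
    using distinct_Ex1[OF assms(1), of i] assms(2) len ij by auto
  have "perm_mat \<sigma> $$ (i, s) * cnj (perm_mat \<sigma> $$ (j, s)) = (if s = t then (if i = j then 1 else 0) else 0)"
    if "s < 4" for s
  proof (cases "s = t")
    case True
    then show ?thesis using t that ij by (simp add: perm_mat_index)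
  next
    case False
    then have "\<sigma> ! s \<noteq> i" using unique that by blast
    then show ?thesis using False that ij by (simp add: perm_mat_index)
  qed
  then have "(\<Sum>s<4. perm_mat \<sigma> $$ (i, s) * cnj (perm_mat \<sigma> $$ (j, s))) = (\<Sum>s<4. if s = t then (if i = j then 1 else 0) else 0)"
    by (intro sum.cong) simp_all
  also have "\<dots> = (if i = j then 1 else 0)"
    using t by simp
  finally show "(\<Sum>s<4. perm_mat \<sigma> $$ (i, s) * cnj (perm_mat \<sigma> $$ (j, s))) = (if i = j then 1 else 0)" .
qed (simp add: perm_mat_def)

(* The valuation of the qubits l1, l2 in basis state |r>, r < 4; l1 is the high bit, as in bidx. *)
definition basis_val :: "'l \<Rightarrow> 'l \<Rightarrow> nat \<Rightarrow> 'l \<Rightarrow> bool" where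
  "basis_val l1 l2 r = (\<lambda>x. (x = l1 \<and> 2 \<le> r) \<or> (x = l2 \<and> odd r))"

lemma basis_val_apply:
  "l1 \<noteq> l2 \<Longrightarrow> basis_val l1 l2 r l1 \<longleftrightarrow> 2 \<le> r"
  "l1 \<noteq> l2 \<Longrightarrow> basis_val l1 l2 r l2 \<longleftrightarrow> odd r"
  by (simp_all add: basis_val_def)

lemma basis_val_inject:
  assumes "l1 \<noteq> l2" "r < 4" "s < 4"
  shows "basis_val l1 l2 r = basis_val l1 l2 s \<longleftrightarrow> r = s"
proof
  assume "basis_val l1 l2 r = basis_val l1 l2 s"
  then have "2 \<le> r \<longleftrightarrow> 2 \<le> s" "odd r \<longleftrightarrow> odd s"
    using basis_val_apply[OF assms(1)] by metis+
  then show "r = s"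
    using assms(2,3) by (auto dest!: less_4_cases)
qed simp

lemma canon_qubits_iff:
  assumes "l1 \<noteq> l2"
  shows "canon {l1, l2} f \<longleftrightarrow> (\<exists>r<4. f = basis_val l1 l2 r)"
proof
  assume f: "canon {l1, l2} f"
  define r :: nat where "r = (if f l1 then 2 else 0) + (if f l2 then 1 else 0)"
  have "f x = basis_val l1 l2 r x" for x
    using f assms by (cases "x = l1"; cases "x = l2") (auto simp: canon_def basis_val_def r_def)
  moreover have "r < 4"
    by (simp add: r_def)
  ultimately show "\<exists>r<4. f = basis_val l1 l2 r"
    by blast
qed (auto simp: canon_def basis_val_def)

lemma canon_idx_qubit_env:
  assumes "l1 \<noteq> l2"
  shows "canon_idx [l1 \<mapsto> Qbit, l2 \<mapsto> Qbit] c i j \<longleftrightarrow>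
    c = (\<lambda>_. False) \<and> (\<exists>r<4. i = basis_val l1 l2 r) \<and> (\<exists>s<4. j = basis_val l1 l2 s)"
proof -
  have "labels_of [l1 \<mapsto> Qbit, l2 \<mapsto> Qbit] Bit = {}" "labels_of [l1 \<mapsto> Qbit, l2 \<mapsto> Qbit] Qbit = {l1, l2}"
    by (auto simp: labels_of_def)
  moreover have "canon {} c \<longleftrightarrow> c = (\<lambda>_. False)"
    by (auto simp: canon_def)
  ultimately show ?thesis
    by (simp add: canon_idx_def canon_qubits_iff[OF assms])
qed

(* The density matrix of a state over [l1 : qbit, l2 : qbit]. *)
definition entry :: "'l \<Rightarrow> 'l \<Rightarrow> 'l state \<Rightarrow> nat \<Rightarrow> nat \<Rightarrow> complex" where
  "entry l1 l2 y r s = y (\<lambda>_. False) (basis_val l1 l2 r) (basis_val l1 l2 s)"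

lemma entry_plus [simp]: "entry l1 l2 (x + y) r s = entry l1 l2 x r s + entry l1 l2 y r s"
  by (simp add: entry_def)

lemma entry_minus [simp]: "entry l1 l2 (x - y) r s = entry l1 l2 x r s - entry l1 l2 y r s"
  by (simp add: entry_def)

lemma entry_scale_state [simp]: "entry l1 l2 (scale_state a x) r s = a * entry l1 l2 x r s"
  by (simp add: entry_def scale_state_def)

lemma entry_sum [simp]: "entry l1 l2 (\<Sum>a\<in>A. f a) r s = (\<Sum>a\<in>A. entry l1 l2 (f a) r s)"
  by (simp add: entry_def sum_state_apply)

lemma agree_on_qubit_env:
  assumes "l1 \<noteq> l2"
  shows "agree_on [l1 \<mapsto> Qbit, l2 \<mapsto> Qbit] x y \<longleftrightarrow> (\<forall>r<4. \<forall>s<4. entry l1 l2 x r s = entry l1 l2 y r s)"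
  unfolding agree_on_def canon_idx_qubit_env[OF assms] entry_def by blast

abbreviation gate2 :: "'l \<Rightarrow> 'l \<Rightarrow> complex mat \<Rightarrow> 'l state \<Rightarrow> 'l state" where
  "gate2 l1 l2 M \<equiv> usem M [l1, l2] [l1, l2]"

lemma setv_basis_val:
  "l1 \<noteq> l2 \<Longrightarrow> setv (clr (basis_val l1 l2 t) [l1, l2]) [l1, l2] [a, b] =
     basis_val l1 l2 ((if a then 2 else 0) + (if b then 1 else 0))"
  by (rule ext, simp add: clr_def basis_val_def)

lemma bidx_pair: "bidx [a, b] = (if a then 2 else 0) + (if b then 1 else 0)"
  by simp

lemma bidx_basis_val: "l1 \<noteq> l2 \<Longrightarrow> r < 4 \<Longrightarrow> bidx (map (basis_val l1 l2 r) [l1, l2]) = r"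
  by (auto simp: basis_val_def dest!: less_4_cases)

lemma entry_usem:
  assumes "l1 \<noteq> l2" "r < 4" "s < 4"
  shows "entry l1 l2 (usem M [l1, l2] [l1, l2] y) r s =
    (\<Sum>p<4. \<Sum>q<4. M $$ (r, p) * entry l1 l2 y p q * cnj (M $$ (s, q)))"
proof -
  have lists: "{xs :: bool list. length xs = length [l1, l2]} =
      {[False, False], [False, True], [True, False], [True, True]}"
    by (auto simp: length_Suc_conv)
  have sum_lists: "(\<Sum>a\<in>{xs :: bool list. length xs = length [l1, l2]}. g a) =
      g [False, False] + g [False, True] + g [True, False] + g [True, True]" for g :: "bool list \<Rightarrow> complex"
    unfolding lists by simp
  show ?thesis
    unfolding entry_def usem_def sum_lists bidx_basis_val[OF assms(1,2)] bidx_basis_val[OF assms(1,3)]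
      setv_basis_val[OF assms(1)] sum_less_4 bidx_pair
    by simp
qed

lemma entry_usem_rank_one:
  assumes "l1 \<noteq> l2" "r < 4" "s < 4"
    and y: "\<And>p q. p < 4 \<Longrightarrow> q < 4 \<Longrightarrow> entry l1 l2 y p q = u p * cnj (w q)"
  shows "entry l1 l2 (gate2 l1 l2 M y) r s = (\<Sum>p<4. M $$ (r, p) * u p) * cnj (\<Sum>q<4. M $$ (s, q) * w q)"
proof -
  have "entry l1 l2 (gate2 l1 l2 M y) r s = (\<Sum>p<4. \<Sum>q<4. (M $$ (r, p) * u p) * cnj (M $$ (s, q) * w q))"
    unfolding entry_usem[OF assms(1-3)] by (intro sum.cong refl) (simp add: y ac_simps)
  also have "\<dots> = (\<Sum>p<4. M $$ (r, p) * u p) * cnj (\<Sum>q<4. M $$ (s, q) * w q)"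
    by (simp add: sum_product cnj_sum)
  finally show ?thesis .
qed

lemma entry_usem_diagonal:
  assumes "l1 \<noteq> l2" "r < 4" "s < 4"
    and diag: "\<And>r' p. r' < 4 \<Longrightarrow> p < 4 \<Longrightarrow> M $$ (r', p) = (if p = r' then d r' else 0)"
  shows "entry l1 l2 (gate2 l1 l2 M y) r s = d r * entry l1 l2 y r s * cnj (d s)"
proof -
  have "entry l1 l2 (gate2 l1 l2 M y) r s =
      (\<Sum>p<4. \<Sum>q<4. if p = r then (if q = s then d r * entry l1 l2 y r s * cnj (d s) else 0) else 0)"
    unfolding entry_usem[OF assms(1-3)] using assms(2,3) by (intro sum.cong refl) (simp add: diag)
  also have "\<dots> = (\<Sum>p<4. if p = r then d r * entry l1 l2 y r s * cnj (d s) else 0)"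
    using assms(3) by (intro sum.cong refl) auto
  also have "\<dots> = d r * entry l1 l2 y r s * cnj (d s)"
    using assms(2) by simp
  finally show ?thesis .
qed

definition unit_state :: "('l \<Rightarrow> bool) \<Rightarrow> ('l \<Rightarrow> bool) \<Rightarrow> ('l \<Rightarrow> bool) \<Rightarrow> 'l state" where
  "unit_state c0 i0 j0 = (\<lambda>c i j. if c = c0 \<and> i = i0 \<and> j = j0 then 1 else 0)"

lemma unit_state_in_states: "canon_idx G c0 i0 j0 \<Longrightarrow> unit_state c0 i0 j0 \<in> states G"
  by (auto simp: states_def unit_state_def)

lemma entry_unit_state:
  assumes "l1 \<noteq> l2" "p < 4" "q < 4" "r < 4" "s < 4"
  shows "entry l1 l2 (unit_state (\<lambda>_. False) (basis_val l1 l2 p) (basis_val l1 l2 q)) r s =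
    (if (r, s) = (p, q) then 1 else 0)"
  using assms by (simp add: entry_def unit_state_def basis_val_inject)

section \<open>A rank bound for the reflection difference\<close>

(* The entries whose sign is flipped by conjugation with Rmat. *)
definition reflection_support :: "(nat \<times> nat) set" where
  "reflection_support = {(p, q). p < 4 \<and> q < 4 \<and> (p = 3 \<longleftrightarrow> q \<noteq> 3)}"

lemma card_reflection_support: "card reflection_support = 6"
proof -
  have support: "reflection_support = {(0, 3), (1, 3), (2, 3), (3, 0), (3, 1), (3, 2)}"
    by (auto simp: reflection_support_def dest!: less_4_cases)
  show ?thesis
    unfolding support by simp
qed

lemma entry_reflection_difference:
  assumes "l1 \<noteq> l2" "r < 4" "s < 4"
  shows "entry l1 l2 (gate2 l1 l2 Rmat y - gate2 l1 l2 (1\<^sub>m 4) y) r s =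
    (if (r, s) \<in> reflection_support then - 2 * entry l1 l2 y r s else 0)"
proof -
  have "entry l1 l2 (gate2 l1 l2 Rmat y) r s =
      (if r = 3 then - 1 else 1) * entry l1 l2 y r s * cnj (if s = 3 then - 1 else 1)"
    by (rule entry_usem_diagonal[OF assms]) (simp add: Rmat_index)
  moreover have "entry l1 l2 (gate2 l1 l2 (1\<^sub>m 4) y) r s = 1 * entry l1 l2 y r s * cnj 1"
    by (rule entry_usem_diagonal[OF assms]) simp
  ultimately show ?thesis
    using assms(2,3) by (simp add: reflection_support_def)
qed

definition basis_state :: "'l \<Rightarrow> 'l \<Rightarrow> nat \<times> nat \<Rightarrow> 'l state" where
  "basis_state l1 l2 pq = unit_state (\<lambda>_. False) (basis_val l1 l2 (fst pq)) (basis_val l1 l2 (snd pq))"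

lemma reflection_difference_expansion:
  assumes "l1 \<noteq> l2" "linear_state E" "preserves_agreement [l1 \<mapsto> Qbit, l2 \<mapsto> Qbit] [l1 \<mapsto> Qbit, l2 \<mapsto> Qbit] E"
    "r < 4" "s < 4"
  shows "entry l1 l2 (E (gate2 l1 l2 Rmat y - gate2 l1 l2 (1\<^sub>m 4) y)) r s =
    - 2 * (\<Sum>pq\<in>reflection_support. entry l1 l2 y (fst pq) (snd pq) * entry l1 l2 (E (basis_state l1 l2 pq)) r s)"
proof -
  define z where
    "z = (\<Sum>pq\<in>reflection_support. scale_state (- 2 * entry l1 l2 y (fst pq) (snd pq)) (basis_state l1 l2 pq))"
  have fin: "finite reflection_support"
    using card_reflection_support card.infinite by fastforce
  have "entry l1 l2 z r' s' = (if (r', s') \<in> reflection_support then - 2 * entry l1 l2 y r' s' else 0)"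
    if "r' < 4" "s' < 4" for r' s'
  proof -
    have "entry l1 l2 z r' s' =
        (\<Sum>pq\<in>reflection_support. (- 2 * entry l1 l2 y (fst pq) (snd pq)) * (if (r', s') = pq then 1 else 0))"
      unfolding z_def entry_sum entry_scale_state basis_state_def
      using assms(1) that by (intro sum.cong refl) (clarsimp simp: entry_unit_state reflection_support_def)
    also have "\<dots> = (if (r', s') \<in> reflection_support then - 2 * entry l1 l2 y r' s' * 1 else 0)"
      using sum_mult_delta(2)[OF fin, of "\<lambda>pq. - 2 * entry l1 l2 y (fst pq) (snd pq)" "(r', s')" 1]
      by simp
    finally show ?thesis
      by simp
  qed
  then have "agree_on [l1 \<mapsto> Qbit, l2 \<mapsto> Qbit] (gate2 l1 l2 Rmat y - gate2 l1 l2 (1\<^sub>m 4) y) z"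
    by (simp add: agree_on_qubit_env[OF assms(1)] entry_reflection_difference[OF assms(1)] del: entry_minus)
  then have "entry l1 l2 (E (gate2 l1 l2 Rmat y - gate2 l1 l2 (1\<^sub>m 4) y)) r s = entry l1 l2 (E z) r s"
    unfolding entry_def
    by (rule preserves_agreementD[OF assms(3)]) (use assms(1,4,5) in \<open>auto simp: canon_idx_qubit_env\<close>)
  also have "\<dots> = (\<Sum>pq\<in>reflection_support.
      (- 2 * entry l1 l2 y (fst pq) (snd pq)) * entry l1 l2 (E (basis_state l1 l2 pq)) r s)"
    unfolding z_def linear_state_sum[OF assms(2)] linear_state_scale[OF assms(2)] by simp
  finally show ?thesis
    by (simp add: sum_distrib_left ac_simps)
qed

definition probe_perms :: "nat list set" where
  "probe_perms = {[0, 3, 2, 1], [0, 1, 3, 2], [1, 2, 3, 0], [1, 0, 3, 2], [1, 0, 2, 3], [2, 1, 3, 0], [2, 0, 3, 1]}"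

lemma probe_perms_permutations: "\<sigma> \<in> probe_perms \<Longrightarrow> distinct \<sigma> \<and> set \<sigma> = {..<4}"
  unfolding probe_perms_def lessThan_4 by (elim insertE) auto

lemma card_probe_perms: "card probe_perms = 7"
  by (simp add: probe_perms_def)

lemma probe_perms_ends:
  "\<sigma> \<in> probe_perms \<Longrightarrow> \<tau> \<in> probe_perms \<Longrightarrow> \<sigma> ! 0 = \<tau> ! 0 \<and> \<sigma> ! 3 = \<tau> ! 3 \<longleftrightarrow> \<sigma> = \<tau>"
  "\<sigma> \<in> probe_perms \<Longrightarrow> \<not> (\<sigma> ! 0 = 0 \<and> \<sigma> ! 3 = 3)"
  "\<sigma> \<in> probe_perms \<Longrightarrow> \<sigma> ! 0 < 4 \<and> \<sigma> ! 3 < 4"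
  unfolding probe_perms_def by (elim insertE; simp)+

lemma reflection_difference_probes_impossible:
  assumes "l1 \<noteq> l2" "factors_mixed_difference [l1 \<mapsto> Qbit, l2 \<mapsto> Qbit] [l1 \<mapsto> Qbit, l2 \<mapsto> Qbit] C b E"
    and probes: "\<forall>\<sigma>\<in>probe_perms. \<exists>y. \<forall>r<4. \<forall>s<4.
      entry l1 l2 (E (gate2 l1 l2 Rmat y - gate2 l1 l2 (1\<^sub>m 4) y)) r s =
        - 2 * ((if r = \<sigma> ! 0 \<and> s = \<sigma> ! 3 then 1 else 0) - (if r = 0 \<and> s = 3 then 1 else 0))"
  shows False
proof -
  obtain Y where Y: "\<forall>\<sigma>\<in>probe_perms. \<forall>r<4. \<forall>s<4.
      entry l1 l2 (E (gate2 l1 l2 Rmat (Y \<sigma>) - gate2 l1 l2 (1\<^sub>m 4) (Y \<sigma>))) r s =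
        - 2 * ((if r = \<sigma> ! 0 \<and> s = \<sigma> ! 3 then 1 else 0) - (if r = 0 \<and> s = 3 then 1 else 0))"
    using bchoice[OF probes] by blast
  \<comment> \<open>At the entries (\<tau> ! 0, \<tau> ! 3) the probe values form -2 times the identity matrix of size 7,
    which would then factor through the six entries of reflection_support.\<close>
  have "card probe_perms \<le> card reflection_support"
  proof (rule identity_factorization_card_le[where a = "\<lambda>\<sigma> pq. entry l1 l2 (Y \<sigma>) (fst pq) (snd pq)"
        and b = "\<lambda>pq \<tau>. entry l1 l2 (E (basis_state l1 l2 pq)) (\<tau> ! 0) (\<tau> ! 3)"])
    show "finite reflection_support" "finite probe_perms"
      using card_reflection_support card_probe_perms card.infinite by fastforce+
    fix \<sigma> \<tau> assume \<sigma>: "\<sigma> \<in> probe_perms" and \<tau>: "\<tau> \<in> probe_perms"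
    have "- 2 * (\<Sum>pq\<in>reflection_support.
        entry l1 l2 (Y \<sigma>) (fst pq) (snd pq) * entry l1 l2 (E (basis_state l1 l2 pq)) (\<tau> ! 0) (\<tau> ! 3)) =
      entry l1 l2 (E (gate2 l1 l2 Rmat (Y \<sigma>) - gate2 l1 l2 (1\<^sub>m 4) (Y \<sigma>))) (\<tau> ! 0) (\<tau> ! 3)"
      using reflection_difference_expansion[OF assms(1)] assms(2) probe_perms_ends(3)[OF \<tau>]
      by (simp add: factors_mixed_difference_def)
    also have "\<dots> = - 2 * (if \<sigma> = \<tau> then 1 else 0)"
      using Y \<sigma> \<tau> probe_perms_ends[OF \<tau>] probe_perms_ends(1)[OF \<tau> \<sigma>] by auto
    finally show "(\<Sum>pq\<in>reflection_support.
        entry l1 l2 (Y \<sigma>) (fst pq) (snd pq) * entry l1 l2 (E (basis_state l1 l2 pq)) (\<tau> ! 0) (\<tau> ! 3)) =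
      (if \<sigma> = \<tau> then 1 else 0)"
      by simp
  qed
  then show False
    by (simp add: card_probe_perms card_reflection_support)
qed

section \<open>The circuit with swapped holes\<close>

lemma entry_bit_block_unit_state:
  assumes "l1 \<noteq> l2" "p < 4" "q < 4" "p0 < 4" "q0 < 4"
  shows "entry l1 l2 (bit_block l b (unit_state ((\<lambda>_. False)(l := v)) (basis_val l1 l2 p0) (basis_val l1 l2 q0))) p q =
    (if p = p0 then (if b = v then 1 else 0) else 0) * cnj (if q = q0 then 1 else 0)"
proof -
  have "(\<lambda>_. False)(l := b) = (\<lambda>_. False)(l := v) \<longleftrightarrow> b = v"
    by (metis fun_upd_same)
  then show ?thesis
    using assms by (simp add: entry_def bit_block_def unit_state_def basis_val_inject)
qed

(* In the branch l = v of the circuit, Rmat fills the hole executed first and P the one executed last. *)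
lemma entry_mixed_difference_swapped_holes:
  fixes P :: "complex mat" and l l1 l2 :: 'l and v :: bool
  assumes "l1 \<noteq> l2" "r < 4" "s < 4" "P \<in> carrier_mat 4 4"
  defines "st \<equiv> unit_state ((\<lambda>_. False)(l := v)) (basis_val l1 l2 0) (basis_val l1 l2 3)"
  shows "entry l1 l2 (mixed_difference (gate2 l1 l2 (if v then Rmat else P)) (gate2 l1 l2 (1\<^sub>m 4))
      (gate2 l1 l2 (if v then P else Rmat)) (gate2 l1 l2 (1\<^sub>m 4)) (If l (Seq Hole1 Hole2) (Seq Hole2 Hole1)) st) r s =
    - 2 * (P $$ (r, 0) * cnj (P $$ (s, 3)) - (if r = 0 \<and> s = 3 then 1 else 0))"
proof -
  have two_gates: "entry l1 l2 (gate2 l1 l2 B (gate2 l1 l2 A (bit_block l b st))) r s =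
      (if b = v then (B * A) $$ (r, 0) * cnj ((B * A) $$ (s, 3)) else 0)"
    if "A \<in> carrier_mat 4 4" "B \<in> carrier_mat 4 4" for A B :: "complex mat" and b
  proof -
    have x: "entry l1 l2 (bit_block l b st) p q =
        (if p = 0 then (if b = v then 1 else 0) else 0) * cnj (if q = 3 then 1 else 0)"
      if "p < 4" "q < 4" for p q
      using that unfolding st_def by (simp add: entry_bit_block_unit_state assms(1))
    have "entry l1 l2 (gate2 l1 l2 A (bit_block l b st)) p q =
        (A $$ (p, 0) * (if b = v then 1 else 0)) * cnj (A $$ (q, 3))"
      if "p < 4" "q < 4" for p q
      using entry_usem_rank_one[OF assms(1) that x] by (simp add: sum_mult_delta)
    then have "entry l1 l2 (gate2 l1 l2 B (gate2 l1 l2 A (bit_block l b st))) r s =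
        (\<Sum>p<4. B $$ (r, p) * (A $$ (p, 0) * (if b = v then 1 else 0))) * cnj (\<Sum>q<4. B $$ (s, q) * A $$ (q, 3))"
      by (rule entry_usem_rank_one[OF assms(1-3)])
    then show ?thesis
      using that assms(2,3) by (simp add: index_mult_mat_4 del: index_mult_mat)
  qed
  have R: "Rmat \<in> carrier_mat 4 4"
    by (simp add: Rmat_def)
  show ?thesis
    unfolding mixed_difference_def csem_If_blocks csem.simps(4) csem_atoms entry_plus entry_minus
    using assms(2-4) R
    by (cases v) (simp_all add: two_gates mult_Rmat_columns Rmat_first_last_column algebra_simps del: index_mult_mat)
qed

lemma approx_mixed_difference:
  assumes "approx l1 l2 Ga De C D" "unitary4 U" "unitary4 U'" "unitary4 V" "unitary4 V'"
    "st \<in> states Ga" "canon_idx De c i j"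
  shows "mixed_difference (gate2 l1 l2 U) (gate2 l1 l2 U') (gate2 l1 l2 V) (gate2 l1 l2 V') C st c i j =
    mixed_difference (gate2 l1 l2 U) (gate2 l1 l2 U') (gate2 l1 l2 V) (gate2 l1 l2 V') D st c i j"
proof -
  have "csem (gate2 l1 l2 X) (gate2 l1 l2 Y) C st c i j = csem (gate2 l1 l2 X) (gate2 l1 l2 Y) D st c i j"
    if "unitary4 X" "unitary4 Y" for X Y
    using assms(1,6,7) that unfolding approx_def fill_sem_def by blast
  then show ?thesis
    by (simp add: mixed_difference_def assms(2-5))
qed

lemma factors_mixed_difference_reflection:
  assumes "factors_mixed_difference Th De C b E"
  shows "\<exists>y. mixed_difference (gate2 l1 l2 (if b then Rmat else P)) (gate2 l1 l2 (1\<^sub>m 4))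
      (gate2 l1 l2 (if b then P else Rmat)) (gate2 l1 l2 (1\<^sub>m 4)) C st = E (gate2 l1 l2 Rmat y - gate2 l1 l2 (1\<^sub>m 4) y)"
proof -
  obtain y where "mixed_difference (gate2 l1 l2 (if b then Rmat else P)) (gate2 l1 l2 (1\<^sub>m 4))
      (gate2 l1 l2 (if b then P else Rmat)) (gate2 l1 l2 (1\<^sub>m 4)) C st =
    E (if b then gate2 l1 l2 (if b then Rmat else P) y - gate2 l1 l2 (1\<^sub>m 4) y
       else gate2 l1 l2 (if b then P else Rmat) y - gate2 l1 l2 (1\<^sub>m 4) y)"
    using assms linear_usem unfolding factors_mixed_difference_def by blast
  then show ?thesis
    by (cases b) auto
qed

lemma approx_swapped_holes_probes:
  fixes l l1 l2 :: 'l
  assumes "distinct [l, l1, l2]"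
    and approx: "approx l1 l2 ([l1 \<mapsto> Qbit, l2 \<mapsto> Qbit](l \<mapsto> Bit)) [l1 \<mapsto> Qbit, l2 \<mapsto> Qbit]
      C (If l (Seq Hole1 Hole2) (Seq Hole2 Hole1))"
    and E: "factors_mixed_difference [l1 \<mapsto> Qbit, l2 \<mapsto> Qbit] [l1 \<mapsto> Qbit, l2 \<mapsto> Qbit] C b E"
  shows "\<forall>\<sigma>\<in>probe_perms. \<exists>y. \<forall>r<4. \<forall>s<4.
    entry l1 l2 (E (gate2 l1 l2 Rmat y - gate2 l1 l2 (1\<^sub>m 4) y)) r s =
      - 2 * ((if r = \<sigma> ! 0 \<and> s = \<sigma> ! 3 then 1 else 0) - (if r = 0 \<and> s = 3 then 1 else 0))"
proof
  fix \<sigma> assume \<sigma>: "\<sigma> \<in> probe_perms"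
  have l12: "l1 \<noteq> l2"
    using assms(1) by simp
  define P where "P = perm_mat \<sigma>"
  define st where "st = unit_state ((\<lambda>_. False)(l := b)) (basis_val l1 l2 0) (basis_val l1 l2 3)"
  let ?md = "\<lambda>C'. mixed_difference (gate2 l1 l2 (if b then Rmat else P)) (gate2 l1 l2 (1\<^sub>m 4))
    (gate2 l1 l2 (if b then P else Rmat)) (gate2 l1 l2 (1\<^sub>m 4)) C' st"
  have P: "unitary4 P" "P \<in> carrier_mat 4 4"
    using unitary_perm_mat probe_perms_permutations[OF \<sigma>] by (auto simp: P_def perm_mat_def)
  have st: "st \<in> states ([l1 \<mapsto> Qbit, l2 \<mapsto> Qbit](l \<mapsto> Bit))"
    unfolding st_def using assms(1)
    by (intro unit_state_in_states) (auto simp: canon_idx_def canon_def labels_of_def basis_val_def)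
  have "entry l1 l2 (?md C) r s =
      - 2 * ((if r = \<sigma> ! 0 \<and> s = \<sigma> ! 3 then 1 else 0) - (if r = 0 \<and> s = 3 then 1 else 0))"
    if rs: "r < 4" "s < 4" for r s
  proof -
    have "entry l1 l2 (?md C) r s = entry l1 l2 (?md (If l (Seq Hole1 Hole2) (Seq Hole2 Hole1))) r s"
      unfolding entry_def
      using unitary_Rmat unitary_one_mat P(1) st rs canon_idx_qubit_env[OF l12]
      by (intro approx_mixed_difference[OF approx]) auto
    also have "\<dots> = - 2 * (P $$ (r, 0) * cnj (P $$ (s, 3)) - (if r = 0 \<and> s = 3 then 1 else 0))"
      unfolding st_def by (rule entry_mixed_difference_swapped_holes[OF l12 rs P(2)])
    finally show ?thesis
      using rs by (simp add: P_def perm_mat_index)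
  qed
  moreover obtain y where "?md C = E (gate2 l1 l2 Rmat y - gate2 l1 l2 (1\<^sub>m 4) y)"
    using factors_mixed_difference_reflection[OF E] by blast
  ultimately show "\<exists>y. \<forall>r<4. \<forall>s<4. entry l1 l2 (E (gate2 l1 l2 Rmat y - gate2 l1 l2 (1\<^sub>m 4) y)) r s =
      - 2 * ((if r = \<sigma> ! 0 \<and> s = \<sigma> ! 3 then 1 else 0) - (if r = 0 \<and> s = 3 then 1 else 0))"
    by metis
qed

theorem mainTheorem2:
  fixes l l1 l2 :: 'l and C :: "'l circ"
  assumes "infinite (UNIV :: 'l set)"
    and "distinct [l, l1, l2]"
    and "typing [l1 \<mapsto> Qbit, l2 \<mapsto> Qbit] ([l1 \<mapsto> Qbit, l2 \<mapsto> Qbit](l \<mapsto> Bit)) C [l1 \<mapsto> Qbit, l2 \<mapsto> Qbit]"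
    and "approx l1 l2 ([l1 \<mapsto> Qbit, l2 \<mapsto> Qbit](l \<mapsto> Bit)) [l1 \<mapsto> Qbit, l2 \<mapsto> Qbit]
           C (If l (Seq Hole1 Hole2) (Seq Hole2 Hole1))"
  shows "count_hole1 C > 1 \<or> count_hole2 C > 1"
proof (rule ccontr)
  assume "\<not> (count_hole1 C > 1 \<or> count_hole2 C > 1)"
  then obtain b E where E: "factors_mixed_difference [l1 \<mapsto> Qbit, l2 \<mapsto> Qbit] [l1 \<mapsto> Qbit, l2 \<mapsto> Qbit] C b E"
    using factors_mixed_difference_exists[OF assms(3)] by fastforce
  have "l1 \<noteq> l2"
    using assms(2) by simp
  then show False
    by (rule reflection_difference_probes_impossible[OF _ E approx_swapped_holes_probes[OF assms(2,4) E]])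
qed

end
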